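(* Let $(G,\mathcal{P})$ be a group pair and $S$ a finite generating set of $G$. (i) $\hat R_\infty(G,\mathcal{P},S)$ is (non-equivariantly) contractible. (ii) For every $\alpha\in\mathbb{N}$, the barycentric subdivision $\hat R_\alpha(G,\mathcal{P},S)'$ of $\hat R_\alpha(G,\mathcal{P},S)$ is a cocompact $G$-CW-complex, and every cell of $\hat R_\alpha(G,\mathcal{P},S)'\smallsetminus G/\mathcal{P}$ has finite stabiliser.
   Context: A group pair $(G,\mathcal{P})$: $G$ finitely generated, $\mathcal{P}$ a non-empty finite collection of subgroups (repetitions allowed); $G/\mathcal{P}=\coprod_{P\in\mathcal{P}}G/P$, elements viewed as cosets (subsets of $G$) and called cone vertices. $d_S$ is the word metric. A finite $U\subseteq G\sqcup G/\mathcal{P}$ is a unicone subset of diameter $\le\alpha$ if $U\cap G$ has $d_S$-diameter $\le\alpha$ and $U$ contains at most one cone vertex $A$, in which case every $g\in U\cap G$ has some $a\in A$ with $d_S(g,a)\le\alpha$. $\hat R_\alpha(G,\mathcal{P},S)$ is the simplicial complex whose simplices are these subsets, and $\hat R_\infty(G,\mathcal{P},S)=\varinjlim_\alpha\hat R_\alpha(G,\mathcal{P},S)$ (union). $G$ acts simplicially by left multiplication on $G\sqcup G/\mathcal{P}$; complexes are identified with their geometric realisations, and the vertices $G/\mathcal{P}$ are vertices of the subdivision. *)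

theory Defs
  imports "HOL-Analysis.Analysis" "HOL-Algebra.Algebra"
begin

definition word_length :: "('g, 'b) monoid_scheme \<Rightarrow> 'g set \<Rightarrow> 'g \<Rightarrow> nat" where
  "word_length G S g =
     (LEAST n. \<exists>ws. length ws = n \<and> set ws \<subseteq> S \<union> (m_inv G ` S)
                   \<and> foldr (\<lambda>x y. x \<otimes>\<^bsub>G\<^esub> y) ws \<one>\<^bsub>G\<^esub> = g)"

definition word_dist :: "('g, 'b) monoid_scheme \<Rightarrow> 'g set \<Rightarrow> 'g \<Rightarrow> 'g \<Rightarrow> nat" where
  "word_dist G S g h = word_length G S (inv\<^bsub>G\<^esub> g \<otimes>\<^bsub>G\<^esub> h)"

text \<open>The collection P is a non-empty list of subgroups (repetitions allowed);
  a cone vertex is a pair (i, A) with A a left coset of the i-th subgroup, so that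
  G/P is the disjoint union of the G/P_i.\<close>
type_synonym 'g vert = "'g + nat \<times> 'g set"

definition cone_vertices :: "('g, 'b) monoid_scheme \<Rightarrow> 'g set list \<Rightarrow> (nat \<times> 'g set) set" where
  "cone_vertices G Ps = {(i, A). i < length Ps \<and> (\<exists>g\<in>carrier G. A = g <#\<^bsub>G\<^esub> (Ps ! i))}"

definition vertices :: "('g, 'b) monoid_scheme \<Rightarrow> 'g set list \<Rightarrow> 'g vert set" where
  "vertices G Ps = Inl ` carrier G \<union> Inr ` cone_vertices G Ps"

definition unicone :: "('g, 'b) monoid_scheme \<Rightarrow> 'g set \<Rightarrow> 'g set list \<Rightarrow> nat \<Rightarrow> 'g vert set \<Rightarrow> bool" where
  "unicone G S Ps \<alpha> U \<longleftrightarrow>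
     finite U \<and> U \<noteq> {} \<and> U \<subseteq> vertices G Ps \<and>
     (\<forall>g\<in>Inl -` U. \<forall>h\<in>Inl -` U. word_dist G S g h \<le> \<alpha>) \<and>
     card (Inr -` U) \<le> 1 \<and>
     (\<forall>c\<in>Inr -` U. \<forall>g\<in>Inl -` U. \<exists>a\<in>snd c. word_dist G S g a \<le> \<alpha>)"

definition Rhat :: "('g, 'b) monoid_scheme \<Rightarrow> 'g set \<Rightarrow> 'g set list \<Rightarrow> nat \<Rightarrow> 'g vert set set" where
  "Rhat G S Ps \<alpha> = {U. unicone G S Ps \<alpha> U}"

definition Rhat_inf :: "('g, 'b) monoid_scheme \<Rightarrow> 'g set \<Rightarrow> 'g set list \<Rightarrow> 'g vert set set" where
  "Rhat_inf G S Ps = (\<Union>\<alpha>. Rhat G S Ps \<alpha>)"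

definition geom_simplex :: "'v set \<Rightarrow> ('v \<Rightarrow> real) set" where
  "geom_simplex \<sigma> = {f. (\<forall>v. 0 \<le> f v) \<and> (\<forall>v. v \<notin> \<sigma> \<longrightarrow> f v = 0) \<and> sum f \<sigma> = 1}"

definition realisation :: "'v set set \<Rightarrow> ('v \<Rightarrow> real) topology" where
  "realisation K = topology (\<lambda>U. U \<subseteq> (\<Union>\<sigma>\<in>K. geom_simplex \<sigma>) \<and>
      (\<forall>\<sigma>\<in>K. openin (subtopology (powertop_real UNIV) (geom_simplex \<sigma>)) (U \<inter> geom_simplex \<sigma>)))"

text \<open>Barycentric subdivision: vertices are the simplices of K, simplices are the
  finite non-empty chains of simplices.\<close>
definition bary :: "'v set set \<Rightarrow> 'v set set set" where
  "bary K = {c. finite c \<and> c \<noteq> {} \<and> c \<subseteq> K \<and> (\<forall>\<sigma>\<in>c. \<forall>\<tau>\<in>c. \<sigma> \<subseteq> \<tau> \<or> \<tau> \<subseteq> \<sigma>)}"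

fun vact :: "('g, 'b) monoid_scheme \<Rightarrow> 'g \<Rightarrow> 'g vert \<Rightarrow> 'g vert" where
  "vact G g (Inl h) = Inl (g \<otimes>\<^bsub>G\<^esub> h)"
| "vact G g (Inr (i, A)) = Inr (i, g <#\<^bsub>G\<^esub> A)"

definition bary_vact :: "('g, 'b) monoid_scheme \<Rightarrow> 'g \<Rightarrow> 'g vert set \<Rightarrow> 'g vert set" where
  "bary_vact G g \<sigma> = vact G g ` \<sigma>"

text \<open>A simplicial complex L (cells = simplices, with the weak topology) with an
  action rho of G on its vertices, acting simplicially, is a G-CW-complex (with
  the simplices as cells) iff every group element mapping a simplex to itself
  fixes it pointwise.\<close>
definition simplicial_G_CW :: "('g, 'b) monoid_scheme \<Rightarrow> ('g \<Rightarrow> 'w \<Rightarrow> 'w) \<Rightarrow> 'w set set \<Rightarrow> bool" where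
  "simplicial_G_CW G \<rho> L \<longleftrightarrow>
     (\<forall>v\<in>\<Union>L. \<rho> \<one>\<^bsub>G\<^esub> v = v) \<and>
     (\<forall>g\<in>carrier G. \<forall>h\<in>carrier G. \<forall>v\<in>\<Union>L. \<rho> (g \<otimes>\<^bsub>G\<^esub> h) v = \<rho> g (\<rho> h v)) \<and>
     (\<forall>g\<in>carrier G. \<forall>\<sigma>\<in>L. \<rho> g ` \<sigma> \<in> L) \<and>
     (\<forall>g\<in>carrier G. \<forall>\<sigma>\<in>L. \<rho> g ` \<sigma> = \<sigma> \<longrightarrow> (\<forall>v\<in>\<sigma>. \<rho> g v = v))"

definition cocompact :: "('g, 'b) monoid_scheme \<Rightarrow> ('g \<Rightarrow> 'w \<Rightarrow> 'w) \<Rightarrow> 'w set set \<Rightarrow> bool" where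
  "cocompact G \<rho> L \<longleftrightarrow> finite ((\<lambda>\<sigma>. (\<lambda>g. \<rho> g ` \<sigma>) ` carrier G) ` L)"

definition stabiliser :: "('g, 'b) monoid_scheme \<Rightarrow> ('g \<Rightarrow> 'w \<Rightarrow> 'w) \<Rightarrow> 'w set \<Rightarrow> 'g set" where
  "stabiliser G \<rho> \<sigma> = {g \<in> carrier G. \<rho> g ` \<sigma> = \<sigma>}"

end

theory Submission
  imports Defs
begin

(* Adjoining the group vertex 1 to a unicone simplex gives a unicone simplex for a larger
   parameter, so hat R_infinity is a cone with apex 1, and the straight-line homotopy to the
   apex contracts its realisation.  Continuity can be checked simplexwise because, the unit
   interval being locally compact, its product with the realisation is a quotient of its
   product with the disjoint union of the closed simplices.
   Left multiplication preserves word distances, hence acts simplicially on every hat R_alpha.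
   An element mapping a chain of simplices onto itself preserves cardinalities and so fixes
   each simplex of the chain; this makes the subdivision a G-CW-complex.  Every simplex can be
   translated into the finite set of vertices within distance alpha of 1, which gives
   cocompactness, and a chain containing a group vertex g can only be stabilised by elements
   h with hg in its largest simplex, of which there are finitely many. *)

section \<open>Geometric realisation\<close>

lemma istopology_realisation:
  "istopology (\<lambda>U. U \<subseteq> (\<Union>\<sigma>\<in>K. geom_simplex \<sigma>) \<and>
      (\<forall>\<sigma>\<in>K. openin (subtopology (powertop_real UNIV) (geom_simplex \<sigma>)) (U \<inter> geom_simplex \<sigma>)))"
    (is "istopology ?open")
proof -
  have "?open (S \<inter> T)" if "?open S" "?open T" for S T
  proof -
    have "S \<inter> T \<inter> geom_simplex \<sigma> = (S \<inter> geom_simplex \<sigma>) \<inter> (T \<inter> geom_simplex \<sigma>)" for \<sigma>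
      by blast
    then show ?thesis
      using that by (auto intro: openin_Int)
  qed
  moreover have "?open (\<Union>\<K>)" if "\<forall>U\<in>\<K>. ?open U" for \<K>
  proof -
    have "\<Union>\<K> \<inter> geom_simplex \<sigma> = (\<Union>U\<in>\<K>. U \<inter> geom_simplex \<sigma>)" for \<sigma>
      by blast
    moreover have "openin (subtopology (powertop_real UNIV) (geom_simplex \<sigma>)) (\<Union>U\<in>\<K>. U \<inter> geom_simplex \<sigma>)"
      if "\<sigma> \<in> K" for \<sigma>
      using that \<open>\<forall>U\<in>\<K>. ?open U\<close> by (intro openin_Union) auto
    ultimately show ?thesis
      using that by auto
  qed
  ultimately show ?thesis
    unfolding istopology_def by blast
qed

lemma openin_realisation:
  "openin (realisation K) U \<longleftrightarrow> U \<subseteq> (\<Union>\<sigma>\<in>K. geom_simplex \<sigma>) \<and>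
      (\<forall>\<sigma>\<in>K. openin (subtopology (powertop_real UNIV) (geom_simplex \<sigma>)) (U \<inter> geom_simplex \<sigma>))"
  unfolding realisation_def using istopology_realisation[of K] by (simp add: topology_inverse')

lemma topspace_realisation: "topspace (realisation K) = (\<Union>\<sigma>\<in>K. geom_simplex \<sigma>)"
proof -
  have "openin (realisation K) (\<Union>\<sigma>\<in>K. geom_simplex \<sigma>)"
    unfolding openin_realisation
  proof (intro conjI ballI)
    fix \<sigma>
    assume "\<sigma> \<in> K"
    then have "(\<Union>\<sigma>\<in>K. geom_simplex \<sigma>) \<inter> geom_simplex \<sigma>
        = topspace (subtopology (powertop_real UNIV) (geom_simplex \<sigma>))"
      by auto
    then show "openin (subtopology (powertop_real UNIV) (geom_simplex \<sigma>))
        ((\<Union>\<sigma>\<in>K. geom_simplex \<sigma>) \<inter> geom_simplex \<sigma>)"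
      by (metis openin_topspace)
  qed simp
  then have "(\<Union>\<sigma>\<in>K. geom_simplex \<sigma>) \<subseteq> topspace (realisation K)"
    by (rule openin_subset)
  moreover have "topspace (realisation K) \<subseteq> (\<Union>\<sigma>\<in>K. geom_simplex \<sigma>)"
    using openin_realisation[of K "topspace (realisation K)"] by simp
  ultimately show ?thesis
    by blast
qed

lemma continuous_map_simplex_realisation:
  assumes "\<sigma> \<in> K"
  shows "continuous_map (subtopology (powertop_real UNIV) (geom_simplex \<sigma>)) (realisation K) (\<lambda>x. x)"
  unfolding continuous_map_def
proof (intro conjI allI impI)
  show "(\<lambda>x. x) \<in> topspace (subtopology (powertop_real UNIV) (geom_simplex \<sigma>)) \<rightarrow> topspace (realisation K)"
    using assms by (auto simp: topspace_realisation)
  fix U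
  assume "openin (realisation K) U"
  then have "openin (subtopology (powertop_real UNIV) (geom_simplex \<sigma>)) (U \<inter> geom_simplex \<sigma>)"
    using assms openin_realisation by blast
  moreover have "{x \<in> topspace (subtopology (powertop_real UNIV) (geom_simplex \<sigma>)). x \<in> U} = U \<inter> geom_simplex \<sigma>"
    by auto
  ultimately show "openin (subtopology (powertop_real UNIV) (geom_simplex \<sigma>))
      {x \<in> topspace (subtopology (powertop_real UNIV) (geom_simplex \<sigma>)). x \<in> U}"
    by simp
qed

definition simplex_sum :: "'v set set \<Rightarrow> ('v set \<times> ('v \<Rightarrow> real)) topology" where
  "simplex_sum K = sum_topology (\<lambda>\<sigma>. subtopology (powertop_real UNIV) (geom_simplex \<sigma>)) K"

lemma topspace_simplex_sum: "topspace (simplex_sum K) = Sigma K geom_simplex"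
  by (auto simp: simplex_sum_def)

lemma openin_simplex_sum_component:
  assumes "\<sigma> \<in> K"
  shows "openin (simplex_sum K) ({\<sigma>} \<times> geom_simplex \<sigma>)"
proof -
  have "openin (simplex_sum K)
      ((\<lambda>x. (\<sigma>, x)) ` topspace (subtopology (powertop_real UNIV) (geom_simplex \<sigma>)))"
    unfolding simplex_sum_def
    by (meson assms open_map_component_injection open_map_def openin_topspace)
  moreover have "(\<lambda>x. (\<sigma>, x)) ` geom_simplex \<sigma> = {\<sigma>} \<times> geom_simplex \<sigma>"
    by auto
  ultimately show ?thesis
    by simp
qed

lemma quotient_map_simplex_sum: "quotient_map (simplex_sum K) (realisation K) snd"
  unfolding quotient_map_def
proof (intro conjI allI impI)
  show "snd ` topspace (simplex_sum K) = topspace (realisation K)"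
    by (force simp: topspace_simplex_sum topspace_realisation)
  fix U
  assume U: "U \<subseteq> topspace (realisation K)"
  have "{x. (\<sigma>, x) \<in> {p \<in> topspace (simplex_sum K). snd p \<in> U}} = U \<inter> geom_simplex \<sigma>"
    if "\<sigma> \<in> K" for \<sigma>
    using that by (auto simp: topspace_simplex_sum)
  then show "openin (simplex_sum K) {p \<in> topspace (simplex_sum K). snd p \<in> U} = openin (realisation K) U"
    using U unfolding simplex_sum_def openin_sum_topology openin_realisation
    by (auto simp: topspace_realisation simplex_sum_def)
qed

lemma continuous_map_simplex_sum_snd:
  fixes K :: "'v set set"
  shows "continuous_map (simplex_sum K) (powertop_real (UNIV :: 'v set)) snd"
  unfolding continuous_map_def
proof (intro conjI allI impI)
  show "snd \<in> topspace (simplex_sum K) \<rightarrow> topspace (powertop_real UNIV)"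
    by simp
  fix U :: "('v \<Rightarrow> real) set"
  assume U: "openin (powertop_real UNIV) U"
  have "{p \<in> topspace (simplex_sum K). snd p \<in> U} = Sigma K (\<lambda>\<sigma>. U \<inter> geom_simplex \<sigma>)"
    by (auto simp: topspace_simplex_sum)
  moreover have "openin (subtopology (powertop_real UNIV) (geom_simplex \<sigma>)) (U \<inter> geom_simplex \<sigma>)" for \<sigma>
    using U by (simp add: openin_subtopology_Int)
  ultimately show "openin (simplex_sum K) {p \<in> topspace (simplex_sum K). snd p \<in> U}"
    by (simp add: simplex_sum_def openin_disjoint_union)
qed

lemma continuous_map_prod_realisation:
  fixes Z :: "'a topology" and K :: "'v set set"
  assumes Z: "locally_compact_space Z" "Hausdorff_space Z"
    and f: "continuous_map (prod_topology Z (powertop_real UNIV)) (powertop_real UNIV) f"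
    and f_simplex: "\<And>\<sigma>. \<sigma> \<in> K \<Longrightarrow> \<exists>\<tau>\<in>K. f ` (topspace Z \<times> geom_simplex \<sigma>) \<subseteq> geom_simplex \<tau>"
  shows "continuous_map (prod_topology Z (realisation K)) (realisation K) f"
proof -
  define Q :: "'a \<times> 'v set \<times> ('v \<Rightarrow> real) \<Rightarrow> 'a \<times> ('v \<Rightarrow> real)"
    where "Q = (\<lambda>(x, y). (x, snd y))"
  have quotient: "quotient_map (prod_topology Z (simplex_sum K)) (prod_topology Z (realisation K)) Q"
    unfolding Q_def using quotient_map_prod_right[OF Z(1) _ quotient_map_simplex_sum] Z(2) by blast
  have "Q = (\<lambda>p. (fst p, snd (snd p)))"
    by (auto simp: Q_def)
  then have "continuous_map (prod_topology Z (simplex_sum K)) (prod_topology Z (powertop_real UNIV)) Q"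
    by (simp add: continuous_map_paired continuous_map_fst
        continuous_map_compose[OF continuous_map_snd continuous_map_simplex_sum_snd, unfolded o_def])
  then have fQ: "continuous_map (prod_topology Z (simplex_sum K)) (powertop_real UNIV) (f \<circ> Q)"
    using f continuous_map_compose by blast
  have "continuous_map (prod_topology Z (simplex_sum K)) (realisation K) (f \<circ> Q)"
  proof (rule pasting_lemma[where I=K and T="\<lambda>\<sigma>. topspace Z \<times> ({\<sigma>} \<times> geom_simplex \<sigma>)"
        and f="\<lambda>_. f \<circ> Q"])
    fix \<sigma>
    assume \<sigma>: "\<sigma> \<in> K"
    then show "openin (prod_topology Z (simplex_sum K)) (topspace Z \<times> ({\<sigma>} \<times> geom_simplex \<sigma>))"
      by (simp add: openin_prod_Times_iff openin_simplex_sum_component)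
    obtain \<tau> where \<tau>: "\<tau> \<in> K" "f ` (topspace Z \<times> geom_simplex \<sigma>) \<subseteq> geom_simplex \<tau>"
      using f_simplex \<sigma> by blast
    then have "continuous_map (subtopology (prod_topology Z (simplex_sum K)) (topspace Z \<times> ({\<sigma>} \<times> geom_simplex \<sigma>)))
        (subtopology (powertop_real UNIV) (geom_simplex \<tau>)) (f \<circ> Q)"
      by (intro continuous_map_into_subtopology continuous_map_from_subtopology fQ) (force simp: Q_def)
    then show "continuous_map (subtopology (prod_topology Z (simplex_sum K)) (topspace Z \<times> ({\<sigma>} \<times> geom_simplex \<sigma>)))
        (realisation K) (f \<circ> Q)"
      using continuous_map_compose[OF _ continuous_map_simplex_realisation[OF \<tau>(1)]] by (simp add: o_def)
  qed (auto simp: topspace_simplex_sum)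
  then show ?thesis
    by (rule continuous_compose_quotient_map[OF quotient])
qed

lemma segment_to_vertex_in_geom_simplex:
  assumes x: "x \<in> geom_simplex \<sigma>" and t: "0 \<le> t" "t \<le> 1"
  shows "(\<lambda>v. (1 - t) * x v + t * (if v = w then 1 else 0)) \<in> geom_simplex (insert w \<sigma>)"
proof -
  have "finite \<sigma>"
    using x by (auto simp: geom_simplex_def intro: ccontr)
  moreover have "sum x (insert w \<sigma>) = 1"
    using x calculation by (cases "w \<in> \<sigma>") (auto simp: geom_simplex_def insert_absorb)
  ultimately show ?thesis
    using x t by (auto simp: geom_simplex_def sum.distrib simp flip: sum_distrib_left)
qed

lemma contractible_space_realisation_cone:
  fixes K :: "'v set set"
  assumes cone: "\<And>\<sigma>. \<sigma> \<in> K \<Longrightarrow> insert w \<sigma> \<in> K"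
  shows "contractible_space (realisation K)"
proof -
  let ?I = "top_of_set {0..1::real}"
  define h :: "real \<times> ('v \<Rightarrow> real) \<Rightarrow> 'v \<Rightarrow> real"
    where "h = (\<lambda>(t, x) v. (1 - t) * x v + t * (if v = w then 1 else 0))"
  have "continuous_map (prod_topology ?I (powertop_real UNIV)) euclideanreal (\<lambda>p. snd p v)" for v
    using continuous_map_compose[OF continuous_map_snd
        continuous_map_product_projection[of v UNIV "\<lambda>_. euclideanreal"]]
    by (simp add: o_def)
  moreover have "continuous_map (prod_topology ?I (powertop_real UNIV)) euclideanreal fst"
    using continuous_map_fst continuous_map_into_fulltopology by blast
  ultimately have h_cont: "continuous_map (prod_topology ?I (powertop_real UNIV)) (powertop_real UNIV) h"
    unfolding continuous_map_componentwise_UNIV h_def case_prod_beta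
    by (intro allI continuous_intros) auto
  have h_simplex: "h ` (topspace ?I \<times> geom_simplex \<sigma>) \<subseteq> geom_simplex (insert w \<sigma>)" for \<sigma>
    using segment_to_vertex_in_geom_simplex by (force simp: h_def)
  have "locally_compact_space ?I" "Hausdorff_space ?I"
    by (auto simp: compact_imp_locally_compact_space compact_space_subtopology Hausdorff_space_subtopology)
  then have "continuous_map (prod_topology ?I (realisation K)) (realisation K) h"
    by (rule continuous_map_prod_realisation[OF _ _ h_cont]) (use cone h_simplex in blast)
  moreover have "h (0, x) = id x" "h (1, x) = (\<lambda>v. if v = w then 1 else 0)" for x
    by (simp_all add: h_def)
  ultimately have "homotopic_with (\<lambda>x. True) (realisation K) (realisation K) id (\<lambda>x v. if v = w then 1 else 0)"
    unfolding homotopic_with_def by blast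
  then show ?thesis
    unfolding contractible_space_def by blast
qed

lemma bary_greatest:
  assumes c: "c \<in> bary K" and finite_simplices: "\<And>\<sigma>. \<sigma> \<in> K \<Longrightarrow> finite \<sigma>"
  obtains \<sigma> where "\<sigma> \<in> c" and "\<Union>c = \<sigma>"
proof -
  have c_props: "finite c" "c \<noteq> {}" "c \<subseteq> K" "\<forall>\<sigma>\<in>c. \<forall>\<tau>\<in>c. \<sigma> \<subseteq> \<tau> \<or> \<tau> \<subseteq> \<sigma>"
    using c by (auto simp: bary_def)
  have "Max (card ` c) \<in> card ` c"
    using c_props by (intro Max_in) auto
  then obtain \<sigma> where \<sigma>: "\<sigma> \<in> c" "card \<sigma> = Max (card ` c)"
    by auto
  have "\<tau> \<subseteq> \<sigma>" if "\<tau> \<in> c" for \<tau>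
    using c_props \<sigma> that finite_simplices by (metis Max_ge card_seteq finite_imageI image_eqI subsetD)
  then show ?thesis
    using that \<sigma> by blast
qed

lemma bary_memD: "c \<in> bary K \<Longrightarrow> \<sigma> \<in> c \<Longrightarrow> \<sigma> \<in> K"
  by (auto simp: bary_def)

lemma bary_image:
  assumes "\<And>\<sigma>. \<sigma> \<in> K \<Longrightarrow> f ` \<sigma> \<in> K" and "c \<in> bary K"
  shows "(\<lambda>\<sigma>. f ` \<sigma>) ` c \<in> bary K"
proof -
  have "\<forall>\<sigma>\<in>c. \<forall>\<tau>\<in>c. f ` \<sigma> \<subseteq> f ` \<tau> \<or> f ` \<tau> \<subseteq> f ` \<sigma>"
    using assms(2) unfolding bary_def by (blast intro: image_mono)
  then show ?thesis
    using assms unfolding bary_def by auto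
qed

text \<open>An injective map that permutes a chain preserves the cardinalities of its members, which
  are pairwise distinct.\<close>

lemma bary_image_eq_imp_fixes_simplices:
  assumes c: "c \<in> bary K" and finite_simplices: "\<And>\<sigma>. \<sigma> \<in> K \<Longrightarrow> finite \<sigma>"
    and inj: "inj_on f (\<Union>K)" and stable: "(\<lambda>\<sigma>. f ` \<sigma>) ` c = c" and \<sigma>: "\<sigma> \<in> c"
  shows "f ` \<sigma> = \<sigma>"
proof -
  have \<sigma>K: "\<sigma> \<in> K" and f\<sigma>: "f ` \<sigma> \<in> c"
    using c \<sigma> stable by (auto simp: bary_def)
  have "card (f ` \<sigma>) = card \<sigma>"
    using inj \<sigma>K by (meson Union_upper card_image inj_on_subset)
  moreover have "f ` \<sigma> \<subseteq> \<sigma> \<or> \<sigma> \<subseteq> f ` \<sigma>"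
    using c \<sigma> f\<sigma> by (auto simp: bary_def)
  ultimately show ?thesis
    using finite_simplices[OF \<sigma>K] by (metis card_subset_eq finite_imageI)
qed

lemma unicone_without_group_vertex:
  assumes U: "unicone G S Ps \<alpha> U" and no_Inl: "Inl -` U = {}"
  obtains A where "A \<in> cone_vertices G Ps" and "U = {Inr A}"
proof -
  have U_eq: "U = Inr ` (Inr -` U)"
  proof (intro equalityI subsetI)
    fix v
    assume "v \<in> U"
    then show "v \<in> Inr ` (Inr -` U)"
      using no_Inl by (cases v) auto
  qed auto
  have "finite (Inr -` U)" "card (Inr -` U) \<le> 1" "U \<noteq> {}"
    using U by (auto simp: unicone_def finite_vimageI)
  moreover have "Inr -` U \<noteq> {}"
    using U_eq calculation(3) by (metis image_empty)
  ultimately obtain A where A: "Inr -` U = {A}"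
    by (metis One_nat_def card_0_eq card_1_singletonE le_SucE le_zero_eq)
  then have "U = {Inr A}"
    using U_eq by simp
  moreover have "A \<in> cone_vertices G Ps"
    using U calculation by (auto simp: unicone_def vertices_def)
  ultimately show ?thesis
    using that by blast
qed

lemma unicone_word_dist:
  assumes "unicone G S Ps \<alpha> U" and "Inl g \<in> U" and "Inl h \<in> U"
  shows "word_dist G S g h \<le> \<alpha>"
proof -
  have "\<forall>g\<in>Inl -` U. \<forall>h\<in>Inl -` U. word_dist G S g h \<le> \<alpha>"
    using assms(1) unfolding unicone_def by (elim conjE)
  then show ?thesis
    using assms(2,3) by simp
qed

lemma unicone_near_cone_vertex:
  assumes "unicone G S Ps \<alpha> U" and "Inr (i, A) \<in> U" and "Inl g \<in> U"
  obtains a where "a \<in> A" and "word_dist G S g a \<le> \<alpha>"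
proof -
  have "\<forall>c\<in>Inr -` U. \<forall>g\<in>Inl -` U. \<exists>a\<in>snd c. word_dist G S g a \<le> \<alpha>"
    using assms(1) unfolding unicone_def by (elim conjE)
  then have "\<exists>a\<in>A. word_dist G S g a \<le> \<alpha>"
    using assms(2,3) by (metis snd_conv vimageI2)
  then show ?thesis
    using that by blast
qed

lemma Rhat_finite: "\<sigma> \<in> Rhat G S Ps \<alpha> \<Longrightarrow> finite \<sigma>"
  by (simp add: Rhat_def unicone_def)

lemma Rhat_subset_vertices: "\<sigma> \<in> Rhat G S Ps \<alpha> \<Longrightarrow> \<sigma> \<subseteq> vertices G Ps"
  by (simp add: Rhat_def unicone_def)

lemma bary_Rhat_without_group_vertex:
  assumes c: "c \<in> bary (Rhat G S Ps \<alpha>)" and no_group_vertex: "\<forall>\<sigma>\<in>c. Inl -` \<sigma> = {}"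
  obtains A where "A \<in> cone_vertices G Ps" and "c = {{Inr A}}"
proof -
  have singleton: "\<exists>A\<in>cone_vertices G Ps. \<sigma> = {Inr A}" if \<sigma>: "\<sigma> \<in> c" for \<sigma>
  proof -
    have "unicone G S Ps \<alpha> \<sigma>"
      using bary_memD[OF c \<sigma>] by (simp add: Rhat_def)
    moreover have "Inl -` \<sigma> = {}"
      using no_group_vertex \<sigma> by blast
    ultimately obtain A where "A \<in> cone_vertices G Ps" "\<sigma> = {Inr A}"
      by (rule unicone_without_group_vertex)
    then show ?thesis
      by blast
  qed
  obtain \<sigma> where \<sigma>: "\<sigma> \<in> c"
    using c by (auto simp: bary_def)
  then obtain A where A: "A \<in> cone_vertices G Ps" "\<sigma> = {Inr A}"
    using singleton by blast
  have "\<tau> = \<sigma>" if \<tau>: "\<tau> \<in> c" for \<tau>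
  proof -
    obtain B where "\<tau> = {Inr B}"
      using singleton \<tau> by blast
    moreover have "\<tau> \<subseteq> \<sigma> \<or> \<sigma> \<subseteq> \<tau>"
      using c \<tau> \<sigma> by (auto simp: bary_def)
    ultimately show ?thesis
      using A by auto
  qed
  then have "c = {{Inr A}}"
    using \<sigma> A by blast
  then show ?thesis
    using that A by blast
qed

section \<open>The word metric\<close>

context group
begin

lemma word_length_one: "word_length G S \<one> = 0"
  unfolding word_length_def by (rule Least_eq_0) (rule exI[of _ "[]"], simp)

lemma word_dist_self: "g \<in> carrier G \<Longrightarrow> word_dist G S g g = 0"
  by (simp add: word_dist_def word_length_one)

lemma word_dist_mult_left:
  "g \<in> carrier G \<Longrightarrow> x \<in> carrier G \<Longrightarrow> y \<in> carrier G \<Longrightarrow>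
    word_dist G S (g \<otimes> x) (g \<otimes> y) = word_dist G S x y"
  unfolding word_dist_def by (simp add: inv_mult_group m_assoc[symmetric]) (simp add: m_assoc)

lemma foldr_mult_carrier: "set ws \<subseteq> carrier G \<Longrightarrow> foldr (\<lambda>x y. x \<otimes> y) ws \<one> \<in> carrier G"
  by (induction ws) auto

lemma foldr_mult_eq:
  "set ws \<subseteq> carrier G \<Longrightarrow> z \<in> carrier G \<Longrightarrow>
    foldr (\<lambda>x y. x \<otimes> y) ws z = foldr (\<lambda>x y. x \<otimes> y) ws \<one> \<otimes> z"
  by (induction ws) (auto simp: m_assoc foldr_mult_carrier)

lemma generate_imp_word:
  assumes "x \<in> generate G S" and S: "S \<subseteq> carrier G"
  shows "\<exists>ws. set ws \<subseteq> S \<union> m_inv G ` S \<and> foldr (\<lambda>x y. x \<otimes> y) ws \<one> = x"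
  using assms(1)
proof (induction rule: generate.induct)
  case one
  show ?case
    by (intro exI[of _ "[]"]) simp
next
  case (incl h)
  then show ?case
    using S by (intro exI[of _ "[h]"]) auto
next
  case (inv h)
  then show ?case
    using S by (intro exI[of _ "[inv h]"]) auto
next
  case (eng h1 h2)
  then obtain ws vs where "set ws \<subseteq> S \<union> m_inv G ` S" "foldr (\<lambda>x y. x \<otimes> y) ws \<one> = h1"
    and "set vs \<subseteq> S \<union> m_inv G ` S" "foldr (\<lambda>x y. x \<otimes> y) vs \<one> = h2"
    by blast
  moreover have "S \<union> m_inv G ` S \<subseteq> carrier G"
    using S by auto
  ultimately show ?case
    using foldr_mult_eq[of ws "foldr (\<lambda>x y. x \<otimes> y) vs \<one>"] foldr_mult_carrier[of vs]
    by (intro exI[of _ "ws @ vs"]) auto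
qed

definition word_ball :: "'a set \<Rightarrow> nat \<Rightarrow> 'a set" where
  "word_ball S \<alpha> = {h \<in> carrier G. word_length G S h \<le> \<alpha>}"

lemma one_in_word_ball: "\<one> \<in> word_ball S \<alpha>"
  by (simp add: word_ball_def word_length_one)

text \<open>Generation is needed: outside generate G S the word length is the junk value
  LEAST n. False.\<close>

lemma finite_word_ball:
  assumes "finite S" "S \<subseteq> carrier G" "generate G S = carrier G"
  shows "finite (word_ball S \<alpha>)"
proof -
  let ?words = "{ws. set ws \<subseteq> S \<union> m_inv G ` S \<and> length ws \<le> \<alpha>}"
  have "word_ball S \<alpha> \<subseteq> (\<lambda>ws. foldr (\<lambda>x y. x \<otimes> y) ws \<one>) ` ?words"
  proof
    fix h
    assume h: "h \<in> word_ball S \<alpha>"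
    then have "\<exists>n ws. length ws = n \<and> set ws \<subseteq> S \<union> m_inv G ` S \<and> foldr (\<lambda>x y. x \<otimes> y) ws \<one> = h"
      using generate_imp_word assms by (auto simp: word_ball_def)
    then have "\<exists>ws. length ws = word_length G S h \<and> set ws \<subseteq> S \<union> m_inv G ` S
        \<and> foldr (\<lambda>x y. x \<otimes> y) ws \<one> = h"
      unfolding word_length_def by (rule LeastI_ex)
    then show "h \<in> (\<lambda>ws. foldr (\<lambda>x y. x \<otimes> y) ws \<one>) ` ?words"
      using h by (force simp: word_ball_def)
  qed
  moreover have "finite ?words"
    using assms(1) by (intro finite_lists_length_le) auto
  ultimately show ?thesis
    using finite_subset by blast
qed

end

locale group_pair = group +
  fixes Ps :: "'a set list"
  assumes subgroups: "\<forall>P\<in>set Ps. subgroup P G"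
begin

lemma subgroup_nth: "i < length Ps \<Longrightarrow> subgroup (Ps ! i) G"
  using subgroups nth_mem by blast

lemma cone_vertices_subset_carrier:
  assumes "(i, A) \<in> cone_vertices G Ps"
  shows "A \<subseteq> carrier G"
proof -
  obtain g where "i < length Ps" "g \<in> carrier G" "A = g <# Ps ! i"
    using assms by (auto simp: cone_vertices_def)
  then show ?thesis
    using l_coset_subset_G subgroup.subset subgroup_nth by metis
qed

lemma cone_vertices_nonempty: "(i, A) \<in> cone_vertices G Ps \<Longrightarrow> A \<noteq> {}"
  using lcos_self subgroup_nth by (fastforce simp: cone_vertices_def)

section \<open>Contractibility of Rhat_inf\<close>

lemma unicone_distances_to_one_bounded:
  assumes U: "unicone G S Ps \<alpha> U"
  obtains \<beta> where "\<alpha> \<le> \<beta>"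
    and "\<And>g. Inl g \<in> U \<Longrightarrow> word_dist G S \<one> g \<le> \<beta>"
    and "\<And>g. Inl g \<in> U \<Longrightarrow> word_dist G S g \<one> \<le> \<beta>"
    and "\<And>i A. Inr (i, A) \<in> U \<Longrightarrow> \<exists>a\<in>A. word_dist G S \<one> a \<le> \<beta>"
proof -
  have U_props: "finite U" "U \<subseteq> vertices G Ps"
    using U by (simp_all add: unicone_def)
  define pick where "pick A = (SOME a. a \<in> snd A)" for A :: "nat \<times> 'a set"
  have pick: "pick A \<in> snd A" if "A \<in> Inr -` U" for A
  proof -
    have "A \<in> cone_vertices G Ps"
      using that U_props(2) by (auto simp: vertices_def)
    then show ?thesis
      unfolding pick_def using cone_vertices_nonempty by (metis ex_in_conv prod.collapse someI_ex)
  qed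
  have "finite (insert \<alpha> ((\<lambda>g. word_dist G S \<one> g + word_dist G S g \<one>) ` (Inl -` U)
      \<union> (\<lambda>A. word_dist G S \<one> (pick A)) ` (Inr -` U)))"
    using U_props(1) by (simp add: finite_vimageI)
  then obtain \<beta> where \<beta>: "\<alpha> \<le> \<beta>"
    "\<And>g. g \<in> Inl -` U \<Longrightarrow> word_dist G S \<one> g + word_dist G S g \<one> \<le> \<beta>"
    "\<And>A. A \<in> Inr -` U \<Longrightarrow> word_dist G S \<one> (pick A) \<le> \<beta>"
    by (auto simp: finite_nat_set_iff_bounded_le)
  show ?thesis
  proof (rule that)
    show "\<alpha> \<le> \<beta>"
      by (rule \<beta>(1))
    show "word_dist G S \<one> g \<le> \<beta>" "word_dist G S g \<one> \<le> \<beta>" if "Inl g \<in> U" for g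
      using \<beta>(2)[of g] that by (meson add_leE vimageI2)+
    show "\<exists>a\<in>A. word_dist G S \<one> a \<le> \<beta>" if "Inr (i, A) \<in> U" for i A
      using pick[of "(i, A)"] \<beta>(3)[of "(i, A)"] that by auto
  qed
qed

lemma unicone_insert_one:
  assumes U: "unicone G S Ps \<alpha> U"
  obtains \<beta> where "unicone G S Ps \<beta> (insert (Inl \<one>) U)"
proof (rule unicone_distances_to_one_bounded[OF U])
  fix \<beta>
  assume \<beta>: "\<alpha> \<le> \<beta>"
    "\<And>g. Inl g \<in> U \<Longrightarrow> word_dist G S \<one> g \<le> \<beta>"
    "\<And>g. Inl g \<in> U \<Longrightarrow> word_dist G S g \<one> \<le> \<beta>"
    "\<And>i A. Inr (i, A) \<in> U \<Longrightarrow> \<exists>a\<in>A. word_dist G S \<one> a \<le> \<beta>"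
  have U_props: "finite U" "U \<subseteq> vertices G Ps" "card (Inr -` U) \<le> 1"
    using U by (simp_all add: unicone_def)
  have Inl_insert: "Inl -` insert (Inl \<one>) U = insert \<one> (Inl -` U)"
    and Inr_insert: "Inr -` insert (Inl \<one>) U = Inr -` U"
    by auto
  have "unicone G S Ps \<beta> (insert (Inl \<one>) U)"
    unfolding unicone_def Inl_insert Inr_insert
  proof (intro conjI ballI)
    show "finite (insert (Inl \<one>) U)" "insert (Inl \<one>) U \<noteq> {}" "card (Inr -` U) \<le> 1"
      using U_props by simp_all
    show "insert (Inl \<one>) U \<subseteq> vertices G Ps"
      using U_props(2) by (simp add: vertices_def)
  next
    fix x y
    assume "x \<in> insert \<one> (Inl -` U)" "y \<in> insert \<one> (Inl -` U)"
    moreover have "word_dist G S g h \<le> \<beta>" if "Inl g \<in> U" "Inl h \<in> U" for g h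
      using unicone_word_dist[OF U that] \<beta>(1) by (rule order_trans)
    ultimately show "word_dist G S x y \<le> \<beta>"
      using \<beta>(2,3) by (cases "x = \<one>"; cases "y = \<one>") (simp_all add: word_dist_self)
  next
    fix A x
    assume A: "A \<in> Inr -` U" and x: "x \<in> insert \<one> (Inl -` U)"
    show "\<exists>b\<in>snd A. word_dist G S x b \<le> \<beta>"
    proof (cases "x = \<one>")
      case True
      then show ?thesis
        using \<beta>(4)[of "fst A" "snd A"] A by simp
    next
      case False
      then have "Inr (fst A, snd A) \<in> U" "Inl x \<in> U"
        using A x by auto
      then obtain b where "b \<in> snd A" "word_dist G S x b \<le> \<alpha>"
        by (rule unicone_near_cone_vertex[OF U])
      then show ?thesis
        using \<beta>(1) by (meson order_trans)
    qed
  qed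
  then show ?thesis
    using that by blast
qed

theorem contractible_space_realisation_Rhat_inf:
  "contractible_space (realisation (Rhat_inf G S Ps))"
proof (rule contractible_space_realisation_cone)
  fix \<sigma>
  assume "\<sigma> \<in> Rhat_inf G S Ps"
  then obtain \<alpha> where "unicone G S Ps \<alpha> \<sigma>"
    by (auto simp: Rhat_inf_def Rhat_def)
  then obtain \<beta> where "unicone G S Ps \<beta> (insert (Inl \<one>) \<sigma>)"
    by (rule unicone_insert_one)
  then show "insert (Inl \<one>) \<sigma> \<in> Rhat_inf G S Ps"
    by (auto simp: Rhat_inf_def Rhat_def)
qed

section \<open>The action on the unicone complexes\<close>

lemma vact_Inr: "vact G g (Inr c) = Inr (fst c, g <# snd c)"
  by (cases c) simp

lemma vact_closed: "g \<in> carrier G \<Longrightarrow> v \<in> vertices G Ps \<Longrightarrow> vact G g v \<in> vertices G Ps"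
  using subgroup.subset subgroup_nth
  by (fastforce simp: vertices_def cone_vertices_def lcos_m_assoc)

lemma vact_one: "v \<in> vertices G Ps \<Longrightarrow> vact G \<one> v = v"
  unfolding vertices_def using cone_vertices_subset_carrier lcos_mult_one by auto

lemma vact_mult:
  "g \<in> carrier G \<Longrightarrow> h \<in> carrier G \<Longrightarrow> v \<in> vertices G Ps \<Longrightarrow>
    vact G (g \<otimes> h) v = vact G g (vact G h v)"
  unfolding vertices_def using cone_vertices_subset_carrier lcos_m_assoc m_assoc by auto

lemma inj_on_vact: "g \<in> carrier G \<Longrightarrow> inj_on (vact G g) (vertices G Ps)"
  by (rule inj_onI) (metis inv_closed l_inv vact_mult vact_one)

lemma Inl_vimage_vact: "Inl -` (vact G g ` U) = (\<lambda>h. g \<otimes> h) ` (Inl -` U)"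
proof (intro equalityI subsetI)
  fix x
  assume "x \<in> Inl -` (vact G g ` U)"
  then obtain u where "u \<in> U" "Inl x = vact G g u"
    by auto
  then show "x \<in> (\<lambda>h. g \<otimes> h) ` (Inl -` U)"
    by (cases u) (auto simp: vact_Inr)
qed force

lemma Inr_vimage_vact: "Inr -` (vact G g ` U) = (\<lambda>(i, A). (i, g <# A)) ` (Inr -` U)"
proof (intro equalityI subsetI)
  fix x
  assume "x \<in> Inr -` (vact G g ` U)"
  then obtain u where "u \<in> U" "Inr x = vact G g u"
    by auto
  then show "x \<in> (\<lambda>(i, A). (i, g <# A)) ` (Inr -` U)"
    by (cases u) (force simp: vact_Inr)+
qed (force simp: vact_Inr)

lemma unicone_vact:
  assumes g: "g \<in> carrier G" and U: "unicone G S Ps \<alpha> U"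
  shows "unicone G S Ps \<alpha> (vact G g ` U)"
  unfolding unicone_def
proof (intro conjI ballI)
  have U_props: "finite U" "U \<noteq> {}" "U \<subseteq> vertices G Ps" "card (Inr -` U) \<le> 1"
    using U by (simp_all add: unicone_def)
  then show "finite (vact G g ` U)" "vact G g ` U \<noteq> {}" "vact G g ` U \<subseteq> vertices G Ps"
    using g vact_closed by auto
  have "card (Inr -` vact G g ` U) \<le> card (Inr -` U)"
    unfolding Inr_vimage_vact using U_props(1) by (intro card_image_le finite_vimageI) simp_all
  then show "card (Inr -` vact G g ` U) \<le> 1"
    using U_props(4) by simp
next
  fix x y
  assume "x \<in> Inl -` vact G g ` U" "y \<in> Inl -` vact G g ` U"
  then obtain x' y' where x'y': "Inl x' \<in> U" "Inl y' \<in> U" "x = g \<otimes> x'" "y = g \<otimes> y'"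
    unfolding Inl_vimage_vact by blast
  moreover have "x' \<in> carrier G" "y' \<in> carrier G"
    using x'y' U by (auto simp: unicone_def vertices_def)
  ultimately show "word_dist G S x y \<le> \<alpha>"
    using unicone_word_dist[OF U] g by (simp add: word_dist_mult_left)
next
  fix c x
  assume "c \<in> Inr -` vact G g ` U" "x \<in> Inl -` vact G g ` U"
  then obtain i A h where iAh: "Inr (i, A) \<in> U" "c = (i, g <# A)" "Inl h \<in> U" "x = g \<otimes> h"
    unfolding Inl_vimage_vact Inr_vimage_vact by force
  obtain b where b: "b \<in> A" "word_dist G S h b \<le> \<alpha>"
    using unicone_near_cone_vertex[OF U iAh(1,3)] .
  have "A \<subseteq> carrier G" "h \<in> carrier G"
    using iAh U cone_vertices_subset_carrier by (auto simp: unicone_def vertices_def)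
  then have "word_dist G S x (g \<otimes> b) \<le> \<alpha>"
    using b g iAh(4) by (simp add: subsetD word_dist_mult_left)
  moreover have "g \<otimes> b \<in> snd c"
    using iAh(2) b(1) by (auto simp: l_coset_def)
  ultimately show "\<exists>b\<in>snd c. word_dist G S x b \<le> \<alpha>"
    by blast
qed

lemma Rhat_vact: "g \<in> carrier G \<Longrightarrow> U \<in> Rhat G S Ps \<alpha> \<Longrightarrow> vact G g ` U \<in> Rhat G S Ps \<alpha>"
  by (simp add: Rhat_def unicone_vact)

lemma bary_vact_one: "\<sigma> \<subseteq> vertices G Ps \<Longrightarrow> bary_vact G \<one> \<sigma> = \<sigma>"
  unfolding bary_vact_def by (metis image_cong image_ident subsetD vact_one)

lemma bary_vact_mult:
  "\<sigma> \<subseteq> vertices G Ps \<Longrightarrow> g \<in> carrier G \<Longrightarrow> h \<in> carrier G \<Longrightarrow>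
    bary_vact G (g \<otimes> h) \<sigma> = bary_vact G g (bary_vact G h \<sigma>)"
  unfolding bary_vact_def image_image by (intro image_cong) (auto simp: vact_mult subsetD)

lemma bary_vact_bary_Rhat:
  "g \<in> carrier G \<Longrightarrow> c \<in> bary (Rhat G S Ps \<alpha>) \<Longrightarrow> bary_vact G g ` c \<in> bary (Rhat G S Ps \<alpha>)"
  unfolding bary_vact_def by (intro bary_image Rhat_vact)

lemma bary_vact_stable_imp_fixes:
  assumes c: "c \<in> bary (Rhat G S Ps \<alpha>)" and g: "g \<in> carrier G"
    and stable: "bary_vact G g ` c = c" and \<sigma>: "\<sigma> \<in> c"
  shows "bary_vact G g \<sigma> = \<sigma>"
proof -
  have "inj_on (vact G g) (\<Union>(Rhat G S Ps \<alpha>))"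
    using inj_on_vact[OF g] Rhat_subset_vertices by (meson Union_least inj_on_subset)
  then show ?thesis
    using bary_image_eq_imp_fixes_simplices[OF c Rhat_finite[of _ G S Ps \<alpha>]] stable \<sigma>
    by (simp add: bary_vact_def)
qed

theorem simplicial_G_CW_bary_Rhat: "simplicial_G_CW G (bary_vact G) (bary (Rhat G S Ps \<alpha>))"
proof -
  have vertices: "\<sigma> \<subseteq> vertices G Ps" if \<sigma>: "\<sigma> \<in> \<Union>(bary (Rhat G S Ps \<alpha>))" for \<sigma>
  proof -
    obtain c where "c \<in> bary (Rhat G S Ps \<alpha>)" "\<sigma> \<in> c"
      using \<sigma> by blast
    then show ?thesis
      by (meson Rhat_subset_vertices bary_memD)
  qed
  show ?thesis
    unfolding simplicial_G_CW_def
  proof (intro conjI ballI allI impI)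
    fix \<sigma>
    assume "\<sigma> \<in> \<Union>(bary (Rhat G S Ps \<alpha>))"
    then show "bary_vact G \<one> \<sigma> = \<sigma>"
      by (intro bary_vact_one vertices)
  next
    fix g h \<sigma>
    assume "g \<in> carrier G" "h \<in> carrier G" "\<sigma> \<in> \<Union>(bary (Rhat G S Ps \<alpha>))"
    then show "bary_vact G (g \<otimes> h) \<sigma> = bary_vact G g (bary_vact G h \<sigma>)"
      by (intro bary_vact_mult vertices)
  next
    fix g c
    assume "g \<in> carrier G" "c \<in> bary (Rhat G S Ps \<alpha>)"
    then show "bary_vact G g ` c \<in> bary (Rhat G S Ps \<alpha>)"
      by (rule bary_vact_bary_Rhat)
  next
    fix g c \<sigma>
    assume g: "g \<in> carrier G" and c: "c \<in> bary (Rhat G S Ps \<alpha>)"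
      and stable: "bary_vact G g ` c = c" and \<sigma>: "\<sigma> \<in> c"
    show "bary_vact G g \<sigma> = \<sigma>"
      by (rule bary_vact_stable_imp_fixes[OF c g stable \<sigma>])
  qed
qed

theorem finite_stabiliser_bary_Rhat:
  assumes c: "c \<in> bary (Rhat G S Ps \<alpha>)"
    and not_cone: "c \<notin> {{{Inr A}} | A. A \<in> cone_vertices G Ps}"
  shows "finite (stabiliser G (bary_vact G) c)"
proof -
  have "\<exists>\<sigma>\<in>c. Inl -` \<sigma> \<noteq> {}"
  proof (rule ccontr)
    assume "\<not> (\<exists>\<sigma>\<in>c. Inl -` \<sigma> \<noteq> {})"
    then have "\<forall>\<sigma>\<in>c. Inl -` \<sigma> = {}"
      by blast
    then obtain A where "A \<in> cone_vertices G Ps" "c = {{Inr A}}"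
      by (rule bary_Rhat_without_group_vertex[OF c])
    then show False
      using not_cone by blast
  qed
  then obtain \<sigma> x where \<sigma>: "\<sigma> \<in> c" and x: "Inl x \<in> \<sigma>"
    by blast
  have \<sigma>_Rhat: "\<sigma> \<in> Rhat G S Ps \<alpha>"
    using bary_memD[OF c \<sigma>] .
  then have x_carrier: "x \<in> carrier G"
    using Rhat_subset_vertices[OF \<sigma>_Rhat] x by (auto simp: vertices_def)
  have "stabiliser G (bary_vact G) c \<subseteq> (\<lambda>y. y \<otimes> inv x) ` (Inl -` \<sigma>)"
  proof
    fix g
    assume "g \<in> stabiliser G (bary_vact G) c"
    then have g: "g \<in> carrier G" "bary_vact G g ` c = c"
      by (auto simp: stabiliser_def)
    then have "Inl (g \<otimes> x) \<in> \<sigma>"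
      using bary_vact_stable_imp_fixes[OF c g \<sigma>] x by (force simp: bary_vact_def)
    moreover have "g = (g \<otimes> x) \<otimes> inv x"
      using g x_carrier by (simp add: m_assoc)
    ultimately show "g \<in> (\<lambda>y. y \<otimes> inv x) ` (Inl -` \<sigma>)"
      by blast
  qed
  moreover have "finite (Inl -` \<sigma>)"
    using Rhat_finite[OF \<sigma>_Rhat] by (simp add: finite_vimageI)
  ultimately show ?thesis
    using finite_subset by blast
qed

section \<open>Cocompactness\<close>

definition vertices_near_one :: "'a set \<Rightarrow> nat \<Rightarrow> 'a vert set" where
  "vertices_near_one S \<alpha> = Inl ` word_ball S \<alpha> \<union>
     Inr ` (\<lambda>(i, b). (i, b <# Ps ! i)) ` ({..<length Ps} \<times> word_ball S \<alpha>)"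

lemma finite_vertices_near_one:
  "finite S \<Longrightarrow> S \<subseteq> carrier G \<Longrightarrow> generate G S = carrier G \<Longrightarrow> finite (vertices_near_one S \<alpha>)"
  by (simp add: vertices_near_one_def finite_word_ball)

lemma Rhat_translate_group_vertex:
  assumes \<sigma>: "\<sigma> \<in> Rhat G S Ps \<alpha>" and y: "Inl y \<in> \<sigma>"
  shows "vact G (inv y) ` \<sigma> \<subseteq> vertices_near_one S \<alpha>"
proof
  have \<sigma>_unicone: "unicone G S Ps \<alpha> \<sigma>"
    using \<sigma> by (simp add: Rhat_def)
  have \<sigma>_vertices: "\<sigma> \<subseteq> vertices G Ps"
    using \<sigma> by (rule Rhat_subset_vertices)
  have y_carrier: "y \<in> carrier G"
    using y \<sigma>_vertices by (auto simp: vertices_def)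
  fix w
  assume "w \<in> vact G (inv y) ` \<sigma>"
  then obtain v where v: "v \<in> \<sigma>" and w: "w = vact G (inv y) v"
    by blast
  show "w \<in> vertices_near_one S \<alpha>"
  proof (cases v)
    case (Inl z)
    then have "z \<in> carrier G" "word_dist G S y z \<le> \<alpha>"
      using v y \<sigma>_vertices unicone_word_dist[OF \<sigma>_unicone y] by (auto simp: vertices_def)
    then show ?thesis
      using Inl w y_carrier by (simp add: vertices_near_one_def word_ball_def word_dist_def)
  next
    case (Inr A)
    then obtain i k where A: "A = (i, k <# Ps ! i)" "i < length Ps" "k \<in> carrier G"
      using v \<sigma>_vertices by (auto simp: vertices_def cone_vertices_def)
    obtain b where b: "b \<in> k <# Ps ! i" "word_dist G S y b \<le> \<alpha>"
      using unicone_near_cone_vertex[OF \<sigma>_unicone _ y] v Inr A by blast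
    have b_carrier: "b \<in> carrier G"
      using l_coset_carrier[OF b(1) A(3) subgroup_nth[OF A(2)]] .
    have "k <# Ps ! i = b <# Ps ! i"
      using l_repr_independence[OF b(1) A(3) subgroup_nth[OF A(2)]] .
    then have "w = Inr (i, (inv y \<otimes> b) <# Ps ! i)"
      using Inr w A b_carrier y_carrier subgroup.subset[OF subgroup_nth[OF A(2)]]
      by (simp add: lcos_m_assoc)
    moreover have "inv y \<otimes> b \<in> word_ball S \<alpha>"
      using b(2) y_carrier b_carrier by (simp add: word_ball_def word_dist_def)
    ultimately show ?thesis
      using A(2) unfolding vertices_near_one_def by force
  qed
qed

text \<open>A simplex without group vertices is a single cone vertex k P_i, which k^-1 moves to P_i.\<close>

lemma Rhat_translate_near_one:
  assumes \<sigma>: "\<sigma> \<in> Rhat G S Ps \<alpha>"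
  obtains x where "x \<in> carrier G" and "vact G (inv x) ` \<sigma> \<subseteq> vertices_near_one S \<alpha>"
proof (cases "Inl -` \<sigma> = {}")
  case True
  moreover have "unicone G S Ps \<alpha> \<sigma>"
    using \<sigma> by (simp add: Rhat_def)
  ultimately obtain A where A: "A \<in> cone_vertices G Ps" "\<sigma> = {Inr A}"
    using unicone_without_group_vertex by blast
  then obtain i k where A_eq: "A = (i, k <# Ps ! i)" and i: "i < length Ps" and k: "k \<in> carrier G"
    by (auto simp: cone_vertices_def)
  have "vact G (inv k) (Inr A) = Inr (i, \<one> <# Ps ! i)"
    using A_eq i k subgroup.subset[OF subgroup_nth] by (simp add: lcos_m_assoc)
  then have "vact G (inv k) ` \<sigma> \<subseteq> vertices_near_one S \<alpha>"
    using A i one_in_word_ball by (force simp: vertices_near_one_def)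
  then show ?thesis
    using that k by blast
next
  case False
  then obtain y where "Inl y \<in> \<sigma>"
    by blast
  moreover have "y \<in> carrier G"
    using Rhat_subset_vertices[OF \<sigma>] calculation by (auto simp: vertices_def)
  ultimately show ?thesis
    using that Rhat_translate_group_vertex[OF \<sigma>] by blast
qed

lemma bary_vact_orbit_translate:
  assumes c: "c \<in> bary (Rhat G S Ps \<alpha>)" and x: "x \<in> carrier G"
  shows "(\<lambda>g. bary_vact G g ` (bary_vact G x ` c)) ` carrier G = (\<lambda>g. bary_vact G g ` c) ` carrier G"
proof -
  have "bary_vact G g ` (bary_vact G x ` c) = bary_vact G (g \<otimes> x) ` c" if g: "g \<in> carrier G" for g
  proof -
    have "bary_vact G (g \<otimes> x) \<sigma> = bary_vact G g (bary_vact G x \<sigma>)" if "\<sigma> \<in> c" for \<sigma>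
      using bary_vact_mult[OF Rhat_subset_vertices[OF bary_memD[OF c that]] g x] .
    then show ?thesis
      by (simp add: image_image cong: image_cong)
  qed
  then have "(\<lambda>g. bary_vact G g ` (bary_vact G x ` c)) ` carrier G
      = (\<lambda>g. bary_vact G (g \<otimes> x) ` c) ` carrier G"
    by (simp cong: image_cong)
  also have "\<dots> = (\<lambda>g. bary_vact G g ` c) ` ((\<lambda>g. g \<otimes> x) ` carrier G)"
    by (simp add: image_image)
  also have "(\<lambda>g. g \<otimes> x) ` carrier G = carrier G"
  proof (intro equalityI subsetI)
    fix y
    assume "y \<in> carrier G"
    then show "y \<in> (\<lambda>g. g \<otimes> x) ` carrier G"
      using x by (intro image_eqI[of _ _ "y \<otimes> inv x"]) (auto simp: m_assoc)
  qed (use x in auto)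
  finally show ?thesis .
qed

theorem cocompact_bary_Rhat:
  assumes S: "finite S" "S \<subseteq> carrier G" "generate G S = carrier G"
  shows "cocompact G (bary_vact G) (bary (Rhat G S Ps \<alpha>))"
proof -
  let ?orbit = "\<lambda>c. (\<lambda>g. bary_vact G g ` c) ` carrier G"
  define F where "F = {c \<in> bary (Rhat G S Ps \<alpha>). \<Union>c \<subseteq> vertices_near_one S \<alpha>}"
  have "F \<subseteq> Pow (Pow (vertices_near_one S \<alpha>))"
    by (auto simp: F_def)
  then have "finite F"
    using finite_vertices_near_one[OF S] by (meson finite_Pow_iff finite_subset)
  have "?orbit c \<in> ?orbit ` F" if c: "c \<in> bary (Rhat G S Ps \<alpha>)" for c
  proof -
    obtain \<sigma> where \<sigma>: "\<sigma> \<in> c" "\<Union>c = \<sigma>"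
      using bary_greatest[OF c Rhat_finite[of _ G S Ps \<alpha>]] by blast
    then obtain x where x: "x \<in> carrier G" "vact G (inv x) ` \<sigma> \<subseteq> vertices_near_one S \<alpha>"
      using bary_memD[OF c] Rhat_translate_near_one by blast
    have "?orbit c = ?orbit (bary_vact G (inv x) ` c)"
      using bary_vact_orbit_translate[OF c inv_closed[OF x(1)]] by (rule sym)
    moreover have "bary_vact G (inv x) ` c \<in> F"
      using bary_vact_bary_Rhat[OF inv_closed[OF x(1)] c] x(2) \<sigma>(2)
      by (auto simp: F_def bary_vact_def)
    ultimately show ?thesis
      by (rule image_eqI)
  qed
  then have "?orbit ` bary (Rhat G S Ps \<alpha>) \<subseteq> ?orbit ` F"
    by (rule image_subsetI)
  then show ?thesis
    unfolding cocompact_def using finite_imageI[OF \<open>finite F\<close>] by (rule finite_subset)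
qed

end

theorem lemma4p4:
  fixes G :: "'g monoid" and S :: "'g set" and Ps :: "'g set list"
  assumes "group G"
    and "Ps \<noteq> []"
    and "\<forall>P\<in>set Ps. subgroup P G"
    and "finite S" and "S \<subseteq> carrier G" and "generate G S = carrier G"
  shows "contractible_space (realisation (Rhat_inf G S Ps)) \<and>
    (\<forall>\<alpha>::nat.
       simplicial_G_CW G (bary_vact G) (bary (Rhat G S Ps \<alpha>)) \<and>
       cocompact G (bary_vact G) (bary (Rhat G S Ps \<alpha>)) \<and>
       (\<forall>c\<in>bary (Rhat G S Ps \<alpha>).
          c \<notin> {{{Inr A}} | A. A \<in> cone_vertices G Ps} \<longrightarrow>
          finite (stabiliser G (bary_vact G) c)))"
proof -
  interpret group_pair G Ps
    using assms(1,3) by (simp add: group_pair_def group_pair_axioms_def)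
  show ?thesis
    using contractible_space_realisation_Rhat_inf simplicial_G_CW_bary_Rhat
      cocompact_bary_Rhat[OF assms(4-6)] finite_stabiliser_bary_Rhat
    by blast
qed

end
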